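(* Let $G$ be a finite group. Then (1) $\mathrm{MinDim}(G)\leq \mathrm{MinInt}(G)$; and (2) $\mathrm{MaxDim}(G)\leq \mathrm{MaxInt}(G)$.
   Context: A subgroup $H$ of a finite group $G$ is a maximal intersection in $G$ if $H=M_1\cap\dots\cap M_t$ for some maximal subgroups $M_1,\dots,M_t$ of $G$ ($t\ge 1$). Let $\mathcal M(G)$ be the poset (under inclusion) consisting of $G$ and all maximal intersections in $G$. A set $\mathcal X$ of maximal subgroups of $G$ is irredundant if the intersection of the members of $\mathcal X$ is not equal to the intersection of the members of any proper subset of $\mathcal X$. $\mathrm{MaxDim}(G)$ is the maximal size of an irredundant set of maximal subgroups of $G$. An irredundant set is maximal irredundant if it is not properly contained in any other irredundant set of maximal subgroups; $\mathrm{MinDim}(G)$ is the minimal size of a maximal irredundant set. An unrefinable chain in $\mathcal M(G)$ is a chain $K_t<K_{t-1}<\dots<K_0$ of elements of $\mathcal M(G)$ to which no further element of $\mathcal M(G)$ can be added (so it runs from the Frattini subgroup $\Phi(G)$ to $G$ with no element of $\mathcal M(G)$ strictly between consecutive terms); its length is $t$. $\mathrm{MinInt}(G)$ and $\mathrm{MaxInt}(G)$ denote the minimal and the maximal length of an unrefinable chain in $\mathcal M(G)$. *)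

theory Defs
  imports "HOL-Algebra.Algebra"
begin

definition max_subgroup :: "('a, 'b) monoid_scheme \<Rightarrow> 'a set \<Rightarrow> bool" where
  "max_subgroup G M \<longleftrightarrow> subgroup M G \<and> M \<noteq> carrier G \<and>
     (\<forall>H. subgroup H G \<and> M \<subseteq> H \<longrightarrow> H = M \<or> H = carrier G)"

definition max_subgroups :: "('a, 'b) monoid_scheme \<Rightarrow> 'a set set" where
  "max_subgroups G = {M. max_subgroup G M}"

text \<open>Intersection of a family of subgroups inside G (the empty family gives G).\<close>
definition inter_in :: "('a, 'b) monoid_scheme \<Rightarrow> 'a set set \<Rightarrow> 'a set" where
  "inter_in G S = carrier G \<inter> Inter S"

definition max_intersection :: "('a, 'b) monoid_scheme \<Rightarrow> 'a set \<Rightarrow> bool" where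
  "max_intersection G H \<longleftrightarrow>
     (\<exists>S. S \<noteq> {} \<and> finite S \<and> S \<subseteq> max_subgroups G \<and> H = Inter S)"

definition MI :: "('a, 'b) monoid_scheme \<Rightarrow> 'a set set" where
  "MI G = insert (carrier G) {H. max_intersection G H}"

definition irredundant :: "('a, 'b) monoid_scheme \<Rightarrow> 'a set set \<Rightarrow> bool" where
  "irredundant G S \<longleftrightarrow> S \<subseteq> max_subgroups G \<and>
     (\<forall>T. T \<subset> S \<longrightarrow> inter_in G T \<noteq> inter_in G S)"

definition max_irredundant :: "('a, 'b) monoid_scheme \<Rightarrow> 'a set set \<Rightarrow> bool" where
  "max_irredundant G S \<longleftrightarrow> irredundant G S \<and> (\<forall>T. irredundant G T \<and> S \<subseteq> T \<longrightarrow> T = S)"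

definition MaxDim :: "('a, 'b) monoid_scheme \<Rightarrow> nat" where
  "MaxDim G = Max {card S | S. irredundant G S}"

definition MinDim :: "('a, 'b) monoid_scheme \<Rightarrow> nat" where
  "MinDim G = Min {card S | S. max_irredundant G S}"

definition MI_chain :: "('a, 'b) monoid_scheme \<Rightarrow> 'a set set \<Rightarrow> bool" where
  "MI_chain G C \<longleftrightarrow> C \<subseteq> MI G \<and> (\<forall>x\<in>C. \<forall>y\<in>C. x \<subseteq> y \<or> y \<subseteq> x)"

definition unrefinable_chain :: "('a, 'b) monoid_scheme \<Rightarrow> 'a set set \<Rightarrow> bool" where
  "unrefinable_chain G C \<longleftrightarrow> MI_chain G C \<and> (\<forall>D. MI_chain G D \<and> C \<subseteq> D \<longrightarrow> D = C)"

text \<open>A chain K_t < ... < K_0 has t+1 elements and length t.\<close>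
definition MinInt :: "('a, 'b) monoid_scheme \<Rightarrow> nat" where
  "MinInt G = Min {card C - 1 | C. unrefinable_chain G C}"

definition MaxInt :: "('a, 'b) monoid_scheme \<Rightarrow> nat" where
  "MaxInt G = Max {card C - 1 | C. unrefinable_chain G C}"

end

theory Submission
  imports Defs
begin

text \<open>
  (2) An irredundant family M_1, ..., M_k gives the strictly decreasing chain
  G > M_1 > M_1 \<inter> M_2 > ... > M_1 \<inter> ... \<inter> M_k of maximal intersections, which refines
  to an unrefinable chain of length at least k.

  (1) In an unrefinable chain K_t < ... < K_0 = G, each K_(i+1) = \<Inter>T equals K_i \<inter> M for
  some M in T: choose M \<in> T not containing K_i; then K_i \<inter> M is comparable with every
  member of the chain and so already belongs to it. Hence K_t is an intersection of at most
  t maximal subgroups. For the same reason K_t \<inter> M belongs to the chain for every maximal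
  subgroup M, so K_t is the Frattini subgroup. A minimal subfamily with intersection K_t
  is irredundant, and adding any maximal subgroup (which contains K_t) leaves the
  intersection unchanged, so it is maximal irredundant.
\<close>

lemma subset_maxchain_insert_mem:
  assumes "subset.maxchain A C" "W \<in> A" "\<forall>Y\<in>C. Y \<subseteq> W \<or> W \<subseteq> Y"
  shows "W \<in> C"
proof (rule ccontr)
  assume "W \<notin> C"
  then have "C \<subset> insert W C" by blast
  moreover have "subset.chain A (insert W C)"
    using assms subset.maxchain_imp_chain by (simp add: subset_chain_insert)
  ultimately show False
    using assms(1) unfolding subset.maxchain_def by blast
qed

lemma subset_maxchain_top:
  assumes "subset.maxchain A C" "U \<in> A" "\<forall>Y\<in>A. Y \<subseteq> U"
  shows "U \<in> C"
proof (rule subset_maxchain_insert_mem[OF assms(1,2)])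
  have "C \<subseteq> A"
    using subset.maxchain_imp_chain[OF assms(1)] unfolding subset.chain_def by blast
  then show "\<forall>Y\<in>C. Y \<subseteq> U \<or> U \<subseteq> Y"
    using assms(3) by blast
qed

lemma finite_subset_chain_extend_maxchain:
  assumes "finite A" "subset.chain A C"
  obtains D where "subset.maxchain A D" "C \<subseteq> D"
proof -
  let ?E = "{D. subset.chain A D \<and> C \<subseteq> D}"
  have "?E \<subseteq> Pow A"
    unfolding subset.chain_def by blast
  then have "finite ?E"
    using assms(1) by (simp add: finite_subset)
  moreover have "C \<in> ?E"
    using assms(2) by simp
  ultimately obtain D where D: "D \<in> ?E" and maximal: "\<forall>D'\<in>?E. D \<subseteq> D' \<longrightarrow> D = D'"
    by (metis (no_types, lifting) finite_has_maximal2)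
  have "subset.maxchain A D"
    unfolding subset.maxchain_def
  proof (intro conjI notI)
    show "subset.chain A D"
      using D by simp
    assume "\<exists>S. subset.chain A S \<and> D \<subset> S"
    then obtain S where "subset.chain A S" "D \<subset> S"
      by blast
    moreover have "S \<in> ?E"
      using D \<open>subset.chain A S\<close> \<open>D \<subset> S\<close> by auto
    ultimately show False
      using maximal by blast
  qed
  with D show thesis
    by (auto intro: that)
qed

lemma MI_chain_iff_subset_chain: "MI_chain G C \<longleftrightarrow> subset.chain (MI G) C"
  by (simp add: MI_chain_def subset_chain_def)

lemma unrefinable_chain_iff_subset_maxchain:
  "unrefinable_chain G C \<longleftrightarrow> subset.maxchain (MI G) C"
  by (auto simp: unrefinable_chain_def subset.maxchain_def MI_chain_iff_subset_chain)

lemma max_subgroups_subset_carrier: "M \<in> max_subgroups G \<Longrightarrow> M \<subseteq> carrier G"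
  unfolding max_subgroups_def max_subgroup_def using subgroup.subset by blast

lemma finite_max_subgroups: "finite (carrier G) \<Longrightarrow> finite (max_subgroups G)"
  by (rule finite_subset[of _ "Pow (carrier G)"]) (auto dest: max_subgroups_subset_carrier)

lemma inter_in_empty [simp]: "inter_in G {} = carrier G"
  by (simp add: inter_in_def)

lemma inter_in_insert: "M \<subseteq> carrier G \<Longrightarrow> inter_in G (insert M S) = M \<inter> inter_in G S"
  by (auto simp: inter_in_def)

lemma inter_in_Un: "inter_in G (S \<union> T) = inter_in G S \<inter> inter_in G T"
  by (auto simp: inter_in_def)

lemma inter_in_subset_carrier: "inter_in G S \<subseteq> carrier G"
  by (simp add: inter_in_def)

lemma inter_in_antimono: "S \<subseteq> T \<Longrightarrow> inter_in G T \<subseteq> inter_in G S"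
  by (auto simp: inter_in_def)

lemma inter_in_eq_Inter: "S \<noteq> {} \<Longrightarrow> S \<subseteq> max_subgroups G \<Longrightarrow> inter_in G S = \<Inter>S"
  by (auto simp: inter_in_def dest: max_subgroups_subset_carrier)

lemma mem_MI_iff: "K \<in> MI G \<longleftrightarrow> (\<exists>S. finite S \<and> S \<subseteq> max_subgroups G \<and> K = inter_in G S)"
proof
  assume "K \<in> MI G"
  then consider "K = carrier G" | "max_intersection G K"
    by (auto simp: MI_def)
  then show "\<exists>S. finite S \<and> S \<subseteq> max_subgroups G \<and> K = inter_in G S"
  proof cases
    case 1
    then show ?thesis by (intro exI[of _ "{}"]) simp
  next
    case 2
    then show ?thesis
      unfolding max_intersection_def by (metis inter_in_eq_Inter)
  qed
next
  assume "\<exists>S. finite S \<and> S \<subseteq> max_subgroups G \<and> K = inter_in G S"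
  then obtain S where S: "finite S" "S \<subseteq> max_subgroups G" "K = inter_in G S"
    by blast
  show "K \<in> MI G"
  proof (cases "S = {}")
    case True
    then show ?thesis using S by (simp add: MI_def)
  next
    case False
    then have "K = \<Inter>S"
      using S inter_in_eq_Inter by metis
    then show ?thesis
      using S False unfolding MI_def max_intersection_def by blast
  qed
qed

lemma MI_subset_carrier: "K \<in> MI G \<Longrightarrow> K \<subseteq> carrier G"
  by (auto simp: mem_MI_iff inter_in_def)

lemma carrier_in_MI: "carrier G \<in> MI G"
  by (simp add: MI_def)

lemma finite_MI: "finite (carrier G) \<Longrightarrow> finite (MI G)"
  by (rule finite_subset[of _ "Pow (carrier G)"]) (auto dest: MI_subset_carrier)

lemma MI_Int_max_subgroup:
  assumes "K \<in> MI G" "M \<in> max_subgroups G"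
  shows "K \<inter> M \<in> MI G"
proof -
  obtain S where S: "finite S" "S \<subseteq> max_subgroups G" "K = inter_in G S"
    using assms(1) by (auto simp: mem_MI_iff)
  then have "K \<inter> M = inter_in G (insert M S)"
    using inter_in_insert[OF max_subgroups_subset_carrier[OF assms(2)]] by blast
  then show ?thesis
    using S assms(2) unfolding mem_MI_iff by blast
qed

lemma unrefinable_chain_subset_MI: "unrefinable_chain G C \<Longrightarrow> C \<subseteq> MI G"
  by (simp add: unrefinable_chain_def MI_chain_def)

lemma finite_unrefinable_chain:
  "finite (carrier G) \<Longrightarrow> unrefinable_chain G C \<Longrightarrow> finite C"
  using finite_MI finite_subset unrefinable_chain_subset_MI by blast

lemma carrier_in_unrefinable_chain: "unrefinable_chain G C \<Longrightarrow> carrier G \<in> C"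
  unfolding unrefinable_chain_iff_subset_maxchain
  using carrier_in_MI MI_subset_carrier by (blast intro: subset_maxchain_top)

lemma unrefinable_chain_insert_mem:
  assumes "unrefinable_chain G C" "W \<in> MI G" "\<forall>Z\<in>C. Z \<subseteq> W \<or> W \<subseteq> Z"
  shows "W \<in> C"
  using assms subset_maxchain_insert_mem unrefinable_chain_iff_subset_maxchain by metis

lemma Inter_unrefinable_chain_mem:
  assumes "finite (carrier G)" "unrefinable_chain G C"
  shows "\<Inter>C \<in> C"
proof (rule Inter_in_chain)
  show "finite C" using assms by (rule finite_unrefinable_chain)
  show "C \<noteq> {}" using carrier_in_unrefinable_chain[OF assms(2)] by blast
  show "subset.chain (MI G) C"
    using assms(2) by (simp add: unrefinable_chain_iff_subset_maxchain subset.maxchain_imp_chain)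
qed

lemma unrefinable_chain_comparable:
  "unrefinable_chain G C \<Longrightarrow> Y \<in> C \<Longrightarrow> Z \<in> C \<Longrightarrow> Y \<subseteq> Z \<or> Z \<subseteq> Y"
  by (simp add: unrefinable_chain_def MI_chain_def)

lemma Inter_unrefinable_chain_subset_max_subgroup:
  assumes fin: "finite (carrier G)" and C: "unrefinable_chain G C"
    and M: "M \<in> max_subgroups G"
  shows "\<Inter>C \<subseteq> M"
proof -
  have "\<Inter>C \<inter> M \<in> MI G"
    using Inter_unrefinable_chain_mem[OF fin C] unrefinable_chain_subset_MI[OF C] M
    by (blast intro: MI_Int_max_subgroup)
  moreover have "\<forall>Z\<in>C. \<Inter>C \<inter> M \<subseteq> Z"
    by blast
  ultimately have "\<Inter>C \<inter> M \<in> C"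
    using unrefinable_chain_insert_mem[OF C] by blast
  then show ?thesis
    by blast
qed

lemma unrefinable_chain_mem_eq_Int_max_subgroup:
  assumes fin: "finite (carrier G)" and C: "unrefinable_chain G C"
    and K: "K \<in> C" "K \<noteq> carrier G"
  obtains Y M where "Y \<in> C" "K \<subset> Y" "M \<in> max_subgroups G" "K = Y \<inter> M"
proof -
  let ?above = "{Z\<in>C. K \<subset> Z}"
  have CMI: "C \<subseteq> MI G"
    using C by (rule unrefinable_chain_subset_MI)
  have "K \<subset> carrier G"
    using K CMI MI_subset_carrier by blast
  then have nonempty: "?above \<noteq> {}"
    using carrier_in_unrefinable_chain[OF C] by blast
  have chain: "subset.chain (MI G) ?above"
    using CMI unrefinable_chain_comparable[OF C] by (auto simp: subset_chain_def)
  have "finite ?above"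
    using finite_unrefinable_chain[OF fin C] by simp
  define Y where "Y = \<Inter>?above"
  have "Y \<in> ?above"
    unfolding Y_def using \<open>finite ?above\<close> nonempty chain by (rule Inter_in_chain)
  then have Y: "Y \<in> C" "K \<subset> Y"
    by simp_all
  have cover: "Y \<subseteq> Z" if "Z \<in> C" "K \<subset> Z" for Z
    unfolding Y_def using that by (intro Inter_lower) simp
  have "K \<in> MI G"
    using K(1) CMI by blast
  then obtain S where S: "S \<subseteq> max_subgroups G" "K = inter_in G S"
    unfolding mem_MI_iff by blast
  have "Y \<subseteq> carrier G"
    using Y(1) CMI MI_subset_carrier by blast
  with Y(2) S(2) obtain M where M: "M \<in> S" "\<not> Y \<subseteq> M"
    unfolding inter_in_def by blast
  have KM: "K \<subseteq> Y \<inter> M"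
    using Y(2) S(2) M(1) unfolding inter_in_def by blast
  have "Y \<inter> M \<in> C"
  proof (rule unrefinable_chain_insert_mem[OF C])
    show "Y \<inter> M \<in> MI G"
      using Y(1) M(1) S(1) CMI by (blast intro: MI_Int_max_subgroup)
    show "\<forall>Z\<in>C. Z \<subseteq> Y \<inter> M \<or> Y \<inter> M \<subseteq> Z"
    proof
      fix Z assume "Z \<in> C"
      then consider "K \<subset> Z" | "Z \<subseteq> K"
        using unrefinable_chain_comparable[OF C K(1)] by blast
      then show "Z \<subseteq> Y \<inter> M \<or> Y \<inter> M \<subseteq> Z"
        by cases (use KM cover[OF \<open>Z \<in> C\<close>] in blast)+
    qed
  qed
  have "K = Y \<inter> M"
  proof (rule ccontr)
    assume "K \<noteq> Y \<inter> M"
    with KM have "Y \<subseteq> Y \<inter> M"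
      using cover[OF \<open>Y \<inter> M \<in> C\<close>] by blast
    with M(2) show False
      by blast
  qed
  with Y M(1) S(1) show thesis
    by (intro that) auto
qed

lemma unrefinable_chain_mem_eq_inter_in:
  assumes fin: "finite (carrier G)" and C: "unrefinable_chain G C" and "K \<in> C"
  shows "\<exists>S. S \<subseteq> max_subgroups G \<and> card S \<le> card {Z\<in>C. K \<subset> Z} \<and> inter_in G S = K"
  using \<open>K \<in> C\<close>
proof (induction "card {Z\<in>C. K \<subset> Z}" arbitrary: K rule: less_induct)
  case less
  show ?case
  proof (cases "K = carrier G")
    case True
    then show ?thesis
      by (intro exI[of _ "{}"]) simp
  next
    case False
    then obtain Y M where Y: "Y \<in> C" "K \<subset> Y" and M: "M \<in> max_subgroups G" "K = Y \<inter> M"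
      using unrefinable_chain_mem_eq_Int_max_subgroup[OF fin C less.prems] by blast
    have "{Z\<in>C. Y \<subset> Z} \<subset> {Z\<in>C. K \<subset> Z}"
      using Y by blast
    then have card_less: "card {Z\<in>C. Y \<subset> Z} < card {Z\<in>C. K \<subset> Z}"
      using finite_unrefinable_chain[OF fin C] by (simp add: psubset_card_mono)
    then obtain S where S: "S \<subseteq> max_subgroups G" "card S \<le> card {Z\<in>C. Y \<subset> Z}"
        "inter_in G S = Y"
      using less.hyps Y(1) by blast
    have "inter_in G (insert M S) = K"
      using S(3) M inter_in_insert[OF max_subgroups_subset_carrier] by blast
    moreover have "card (insert M S) \<le> card {Z\<in>C. K \<subset> Z}"
      using S(2) card_less card_insert_if[of S M] finite_subset[OF S(1) finite_max_subgroups[OF fin]]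
      by (simp split: if_splits)
    ultimately show ?thesis
      using S(1) M(1) by blast
  qed
qed

lemma irredundantD:
  "irredundant G S \<Longrightarrow> T \<subset> S \<Longrightarrow> inter_in G T \<noteq> inter_in G S"
  by (simp add: irredundant_def)

lemma irredundant_subset_max_subgroups: "irredundant G S \<Longrightarrow> S \<subseteq> max_subgroups G"
  by (simp add: irredundant_def)

lemma irredundant_empty: "irredundant G {}"
  by (simp add: irredundant_def)

lemma irredundant_subset:
  assumes S: "irredundant G S" and "F \<subseteq> S"
  shows "irredundant G F"
  unfolding irredundant_def
proof (intro conjI allI impI)
  show "F \<subseteq> max_subgroups G"
    using S \<open>F \<subseteq> S\<close> by (auto simp: irredundant_def)
  fix T assume "T \<subset> F"
  then have "T \<union> (S - F) \<subset> S"
    using \<open>F \<subseteq> S\<close> by blast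
  then have "inter_in G (T \<union> (S - F)) \<noteq> inter_in G S"
    using S by (simp add: irredundant_def)
  moreover have "inter_in G S = inter_in G (F \<union> (S - F))"
    using \<open>F \<subseteq> S\<close> by (simp add: Un_absorb1)
  ultimately show "inter_in G T \<noteq> inter_in G F"
    by (metis inter_in_Un)
qed

lemma MI_chain_of_irredundant:
  assumes "finite S" "irredundant G S"
  shows "\<exists>C. MI_chain G C \<and> card C = Suc (card S) \<and> (\<forall>K\<in>C. inter_in G S \<subseteq> K)"
  using assms
proof (induction S rule: finite_induct)
  case empty
  show ?case
    by (intro exI[of _ "{carrier G}"]) (simp add: MI_chain_def carrier_in_MI)
next
  case (insert M S)
  let ?W = "inter_in G (insert M S)"
  obtain C where C: "MI_chain G C" "card C = Suc (card S)" "\<forall>K\<in>C. inter_in G S \<subseteq> K"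
    using insert.IH irredundant_subset[OF insert.prems] by blast
  have "?W \<in> MI G"
    using irredundant_subset_max_subgroups[OF insert.prems] insert.hyps(1)
    by (auto simp: mem_MI_iff)
  have "?W \<noteq> inter_in G S"
    using irredundantD[OF insert.prems, of S] insert.hyps(2) by auto
  then have strict: "?W \<subset> inter_in G S"
    using inter_in_antimono[of S "insert M S"] by blast
  then have "?W \<notin> C"
    using C(3) by blast
  moreover have "MI_chain G (insert ?W C)"
    using C(1,3) \<open>?W \<in> MI G\<close> strict by (auto simp: MI_chain_def)
  moreover have "finite C"
    using C(2) by (simp add: card_ge_0_finite)
  ultimately show ?case
    using C(2,3) strict insert.hyps by (intro exI[of _ "insert ?W C"]) auto
qed

lemma exists_max_irredundant_subset:
  assumes "finite S" "S \<subseteq> max_subgroups G"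
    and Frattini: "\<forall>M\<in>max_subgroups G. inter_in G S \<subseteq> M"
  obtains S' where "S' \<subseteq> S" "max_irredundant G S'"
proof -
  let ?same = "{T. T \<subseteq> S \<and> inter_in G T = inter_in G S}"
  have "finite ?same" "S \<in> ?same"
    using assms(1) by simp_all
  then obtain S' where S': "S' \<in> ?same" and minimal: "\<forall>T\<in>?same. T \<subseteq> S' \<longrightarrow> S' = T"
    by (metis (no_types, lifting) finite_has_minimal2)
  have irr: "irredundant G S'"
    unfolding irredundant_def
  proof (intro conjI allI impI)
    show "S' \<subseteq> max_subgroups G"
      using S' assms(2) by blast
    fix T assume "T \<subset> S'"
    then show "inter_in G T \<noteq> inter_in G S'"
      using S' minimal by auto
  qed
  have maximal: "T = S'" if T: "irredundant G T" "S' \<subseteq> T" for T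
  proof (rule ccontr)
    assume "T \<noteq> S'"
    with T(2) have "inter_in G S' \<noteq> inter_in G T"
      by (intro irredundantD[OF T(1)]) blast
    moreover have "inter_in G S \<subseteq> inter_in G T"
      using Frattini irredundant_subset_max_subgroups[OF T(1)] inter_in_subset_carrier[of G S]
      unfolding inter_in_def[of G T] by blast
    ultimately show False
      using S' inter_in_antimono[OF T(2), of G] by auto
  qed
  have "max_irredundant G S'"
    unfolding max_irredundant_def using irr maximal by blast
  with S' show thesis
    by (intro that[of S']) simp_all
qed

lemma finite_irredundant_cards:
  "finite (carrier G) \<Longrightarrow> finite {card S | S. irredundant G S}"
  by (rule finite_subset[of _ "card ` Pow (max_subgroups G)"])
    (auto simp: irredundant_def finite_max_subgroups)

lemma finite_unrefinable_chain_lengths: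
  "finite (carrier G) \<Longrightarrow> finite {card C - 1 | C. unrefinable_chain G C}"
  by (rule finite_subset[of _ "(\<lambda>C. card C - 1) ` Pow (MI G)"])
    (auto simp: finite_MI dest: unrefinable_chain_subset_MI)

lemma exists_unrefinable_chain_superset:
  assumes "finite (carrier G)" "MI_chain G C"
  obtains D where "unrefinable_chain G D" "C \<subseteq> D"
  using assms finite_MI finite_subset_chain_extend_maxchain
  unfolding MI_chain_iff_subset_chain unrefinable_chain_iff_subset_maxchain by metis

lemma MaxDim_le_MaxInt:
  assumes fin: "finite (carrier G)"
  shows "MaxDim G \<le> MaxInt G"
proof -
  have "MaxDim G \<in> {card S | S. irredundant G S}"
    unfolding MaxDim_def using finite_irredundant_cards[OF fin] irredundant_empty
    by (intro Max_in) auto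
  then obtain S where S: "irredundant G S" "MaxDim G = card S"
    by blast
  have "finite S"
    using S(1) finite_max_subgroups[OF fin] finite_subset by (auto simp: irredundant_def)
  then obtain C where C: "MI_chain G C" "card C = Suc (card S)"
    using MI_chain_of_irredundant S(1) by blast
  obtain D where D: "unrefinable_chain G D" "C \<subseteq> D"
    using exists_unrefinable_chain_superset[OF fin C(1)] .
  have "card C \<le> card D"
    using D finite_unrefinable_chain[OF fin] by (simp add: card_mono)
  then have "MaxDim G \<le> card D - 1"
    using S(2) C(2) by simp
  also have "\<dots> \<le> MaxInt G"
    unfolding MaxInt_def using D(1) finite_unrefinable_chain_lengths[OF fin]
    by (intro Max_ge) auto
  finally show ?thesis .
qed

lemma MinDim_le_MinInt:
  assumes fin: "finite (carrier G)"
  shows "MinDim G \<le> MinInt G"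
proof -
  obtain C0 where "unrefinable_chain G C0"
    using exists_unrefinable_chain_superset[OF fin, of "{}"] by (auto simp: MI_chain_def)
  then have "MinInt G \<in> {card C - 1 | C. unrefinable_chain G C}"
    unfolding MinInt_def using finite_unrefinable_chain_lengths[OF fin]
    by (intro Min_in) auto
  then obtain C where C: "unrefinable_chain G C" "MinInt G = card C - 1"
    by blast
  let ?B = "\<Inter>C"
  have "finite C" "?B \<in> C"
    using C(1) fin finite_unrefinable_chain Inter_unrefinable_chain_mem by blast+
  obtain S where S: "S \<subseteq> max_subgroups G" "card S \<le> card {Z\<in>C. ?B \<subset> Z}" "inter_in G S = ?B"
    using unrefinable_chain_mem_eq_inter_in[OF fin C(1) \<open>?B \<in> C\<close>] by blast
  have "finite S"
    using S(1) finite_max_subgroups[OF fin] finite_subset by blast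
  then obtain S' where S': "S' \<subseteq> S" "max_irredundant G S'"
    using exists_max_irredundant_subset S(1,3)
      Inter_unrefinable_chain_subset_max_subgroup[OF fin C(1)] by metis
  have "MinDim G \<le> card S'"
    unfolding MinDim_def using S'(2) finite_irredundant_cards[OF fin]
    by (intro Min_le) (auto simp: max_irredundant_def elim!: finite_subset[rotated])
  also have "\<dots> \<le> card S"
    using S'(1) \<open>finite S\<close> by (rule card_mono[rotated])
  also have "\<dots> \<le> card (C - {?B})"
    using S(2) \<open>finite C\<close> card_mono[of "C - {?B}" "{Z\<in>C. ?B \<subset> Z}"] by fastforce
  also have "\<dots> = MinInt G"
    using C(2) \<open>?B \<in> C\<close> \<open>finite C\<close> by simp
  finally show ?thesis .
qed

theorem mainTheorem1:
  fixes G :: "('a, 'b) monoid_scheme"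
  assumes "group G" and "finite (carrier G)"
  shows "MinDim G \<le> MinInt G \<and> MaxDim G \<le> MaxInt G"
  using assms(2) by (simp add: MinDim_le_MinInt MaxDim_le_MaxInt)

end
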